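(* Consider a run of the algorithm described in the context, and assume the event $\mathcal E$ occurs. Let $j$ be an iteration of the run and let $\mathcal V_{(j)}$ be the value of $\mathcal V$ at the start of iteration $j$. For a family $f$ define \[S_j^{\neg}(f):=\max\{\mathcal S(E): E\in\mathcal E_{d,k},\ E^{(j)}\neq\emptyset,\ f\notin U(E^{(j)})\}.\] Suppose that for some $f\in U(\mathcal G_j^* )\cap\mathcal F_{\mathrm{act}}(\mathcal V_{(j)})$ we have $S_j^\neg(f)<\mathcal S^*-2\theta_j$, where $\mathcal G_j^*=\{G\in\mathcal G_j:\mathcal S(G)=\mathcal S^*\}$. Then some family is accepted by the algorithm at iteration $j$.
   Context: Setting. $\mathbf{X}=(X_1,\dots,X_d)$ is a random vector; $k$ a fixed positive integer; natural logarithms. A family is $f=\langle X_i,\Pi\rangle$ with $\Pi\subseteq\{X_1,\dots,X_d\}\setminus\{X_i\}$, $|\Pi|\le k$; $\mathcal F_{d,k}$ the set of families; $H(f)=H(X_i\mid\Pi)$. $\mathcal G_{d,k}$ = DAGs over the variables with in-degree $\le k$, identified with their family sets; $\mathcal S(F)=-\sum_{f\in F}H(f)$; $\mathcal S^*=\max_{G\in\mathcal G_{d,k}}\mathcal S(G)$. $\mathcal E_{d,k}$ is the set of Markov equivalence classes (ECs) on $\mathcal G_{d,k}$; graphs in an EC $E$ share a score $\mathcal S(E)$. Each sample is an independent copy of $\mathbf X$ of which only a chosen set of $k+1$ coordinates is revealed. $\hat H$ is an estimator of $H(f)$ from the samples where all variables of $f$ were observed, and $N(\epsilon,\delta)$ is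 such that for any fixed $f$, at least $N(\epsilon,\delta)$ such samples give $|\hat H(f)-H(f)|\le\epsilon$ with probability $\ge1-\delta$. Notation: $\mathcal F_{\mathrm{act}}(\mathcal V)$ = families whose child is not in $\mathcal V\subseteq[d]$; $\mathcal G_j=\{G\in\mathcal G_{d,k}:\mathcal A_j\subseteq G\}$; $E^{(j)}=E\cap\mathcal G_j$; $U(\mathcal A)=\bigcup_{G\in\mathcal A}G$; $\hat H_t(f)$ = estimate from all samples up to round $t$; $\hat{\mathcal S}_t(G)=-\sum_{f\in G}\hat H_t(f)$; $\hat{\mathcal S}_t(\mathcal A)=\max_{G\in\mathcal A}\hat{\mathcal S}_t(G)$. Algorithm (inputs $d,k,\delta\in(0,1),\epsilon,\epsilon_1>0$). Initialize $\mathcal A_1=\emptyset,\mathcal V=\emptyset,N_0=0,t=1,j=1,T=\lceil\log_2(2d\epsilon_1/\epsilon)\rceil$. While $\epsilon_t>\epsilon/(d-|\mathcal V|)$ (a "round" $t$): $N_t=N(\epsilon_t/2,\delta/(T|\mathcal F_{\mathrm{act}}(\mathcal V)|))$; observe each $(k+1)$-subset of $[d]$ not contained in $\mathcal V$ in $N_t-N_{t-1}$ new samples; repeat the following "iteration" until $\mathcal A_j=\mathcal A_{j-1}$: $\theta_j=(d-|\mathcal V|)\epsilon_t$; $\hat G_j\in\arg\max_{G\in\mathcal G_j}\hat{\mathcal S}_t(G)$, $\hat E_j$ its EC; $L_j=\{E\in\mathcal E_{d,k}:E^{(j)}\neq\emptyset,\hat{\mathcal S}_t(\hat E_j^{(j)})-\hat{\mathcal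 S}_t(E^{(j)})\le\theta_j\}$; if some $f\in U(\hat E_j^{(j)})\cap\mathcal F_{\mathrm{act}}(\mathcal V)$ satisfies $f\in U(E^{(j)})$ for all $E\in L_j$, accept one such $f=\langle X_v,\Pi\rangle$: $\mathcal V\leftarrow\mathcal V\cup\{v\}$, $\mathcal A_{j+1}=\mathcal A_j\cup\{f\}$; else $\mathcal A_{j+1}=\mathcal A_j$; $j\leftarrow j+1$. After the iterations, if $|\mathcal V|=d$ return $\mathcal A_j$; else $t\leftarrow t+1$, $\epsilon_t=\epsilon_{t-1}/2$. After the while loop: $\epsilon_{\mathrm{last}}=\epsilon/(d-|\mathcal V|)$, $N_T=N(\epsilon_{\mathrm{last}}/2,\delta/(T|\mathcal F_{\mathrm{act}}(\mathcal V)|))$, observe remaining subsets in $N_T-N_{T-1}$ more samples, return a maximizer of $\hat{\mathcal S}_T$ over $\mathcal G_j$. Event: with $\mathcal V_t$ the value of $\mathcal V$ at the start of round $t$, $\mathcal E:=\{\forall t\in[T],\forall f\in\mathcal F_{\mathrm{act}}(\mathcal V_t): |\hat H_t(f)-H(f)|\le\epsilon_t/2\}$. *)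

theory Defs
  imports "HOL-Probability.Probability_Mass_Function"
begin

text \<open>Variables are indexed by 0..<d. A family is a pair (child, parent set).\<close>
type_synonym family = "nat \<times> nat set"

definition ent :: "'a pmf \<Rightarrow> real" where
  "ent q = - (\<Sum>x\<in>set_pmf q. pmf q x * ln (pmf q x))"

definition marg :: "(nat \<Rightarrow> 'v) pmf \<Rightarrow> nat set \<Rightarrow> (nat \<Rightarrow> 'v) pmf" where
  "marg P A = map_pmf (\<lambda>\<omega> i. if i \<in> A then \<omega> i else undefined) P"

text \<open>H(f) = H(X_i | X_Pi) = H(X_i, X_Pi) - H(X_Pi).\<close>
definition Hfam :: "(nat \<Rightarrow> 'v) pmf \<Rightarrow> family \<Rightarrow> real" where
  "Hfam P f = ent (marg P (insert (fst f) (snd f))) - ent (marg P (snd f))"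

definition families :: "nat \<Rightarrow> nat \<Rightarrow> family set" where
  "families d k = {(i, Pa). i < d \<and> Pa \<subseteq> {..<d} - {i} \<and> card Pa \<le> k}"

definition edges :: "family set \<Rightarrow> (nat \<times> nat) set" where
  "edges G = {(u, v). \<exists>Pa. (v, Pa) \<in> G \<and> u \<in> Pa}"

text \<open>DAGs on the d variables with in-degree at most k, identified with their family sets.\<close>
definition dags :: "nat \<Rightarrow> nat \<Rightarrow> family set set" where
  "dags d k = {G. G \<subseteq> families d k \<and> (\<forall>i<d. \<exists>!Pa. (i, Pa) \<in> G) \<and> acyclic (edges G)}"

definition score :: "(family \<Rightarrow> real) \<Rightarrow> family set \<Rightarrow> real" where
  "score H G = - (\<Sum>f\<in>G. H f)"

definition Sstar :: "nat \<Rightarrow> nat \<Rightarrow> (family \<Rightarrow> real) \<Rightarrow> real" where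
  "Sstar d k H = Max (score H ` dags d k)"

definition adj :: "family set \<Rightarrow> nat \<Rightarrow> nat \<Rightarrow> bool" where
  "adj G u v \<longleftrightarrow> (u, v) \<in> edges G \<or> (v, u) \<in> edges G"

definition trail :: "family set \<Rightarrow> nat list \<Rightarrow> bool" where
  "trail G p \<longleftrightarrow> 2 \<le> length p \<and> distinct p \<and>
     (\<forall>m. m + 1 < length p \<longrightarrow> adj G (p ! m) (p ! (m + 1)))"

definition collider :: "family set \<Rightarrow> nat list \<Rightarrow> nat \<Rightarrow> bool" where
  "collider G p m \<longleftrightarrow> (p ! (m - 1), p ! m) \<in> edges G \<and> (p ! (m + 1), p ! m) \<in> edges G"

definition blocked :: "family set \<Rightarrow> nat set \<Rightarrow> nat list \<Rightarrow> bool" where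
  "blocked G Z p \<longleftrightarrow> (\<exists>m. 0 < m \<and> m + 1 < length p \<and>
     (if collider G p m then (\<forall>w. (p ! m, w) \<in> (edges G)\<^sup>* \<longrightarrow> w \<notin> Z)
      else p ! m \<in> Z))"

definition dsep :: "family set \<Rightarrow> nat set \<Rightarrow> nat set \<Rightarrow> nat set \<Rightarrow> bool" where
  "dsep G A B Z \<longleftrightarrow> (\<forall>p. trail G p \<and> hd p \<in> A \<and> last p \<in> B \<longrightarrow> blocked G Z p)"

definition markov_equiv :: "nat \<Rightarrow> family set \<Rightarrow> family set \<Rightarrow> bool" where
  "markov_equiv d G G' \<longleftrightarrow> (\<forall>A B Z. A \<subseteq> {..<d} \<and> B \<subseteq> {..<d} \<and> Z \<subseteq> {..<d} \<and>
      A \<inter> B = {} \<and> A \<inter> Z = {} \<and> B \<inter> Z = {} \<longrightarrow> (dsep G A B Z \<longleftrightarrow> dsep G' A B Z))"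

definition meq_rel :: "nat \<Rightarrow> nat \<Rightarrow> (family set \<times> family set) set" where
  "meq_rel d k = {(G, G'). G \<in> dags d k \<and> G' \<in> dags d k \<and> markov_equiv d G G'}"

definition ECs :: "nat \<Rightarrow> nat \<Rightarrow> family set set set" where
  "ECs d k = dags d k // meq_rel d k"

definition ec_of :: "nat \<Rightarrow> nat \<Rightarrow> family set \<Rightarrow> family set set" where
  "ec_of d k G = meq_rel d k `` {G}"

text \<open>Score of an equivalence class (all members share it in the paper's setting; we take the max).\<close>
definition score_EC :: "(family \<Rightarrow> real) \<Rightarrow> family set set \<Rightarrow> real" where
  "score_EC H E = Max (score H ` E)"

definition Fact :: "nat \<Rightarrow> nat \<Rightarrow> nat set \<Rightarrow> family set" where
  "Fact d k V = {f \<in> families d k. fst f \<notin> V}"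

definition Gj :: "nat \<Rightarrow> nat \<Rightarrow> family set \<Rightarrow> family set set" where
  "Gj d k A = {G \<in> dags d k. A \<subseteq> G}"

definition Ufam :: "family set set \<Rightarrow> family set" where
  "Ufam \<A> = \<Union>\<A>"

definition Shat_set :: "(family \<Rightarrow> real) \<Rightarrow> family set set \<Rightarrow> real" where
  "Shat_set Hh \<A> = Max (score Hh ` \<A>)"

definition epsr :: "real \<Rightarrow> nat \<Rightarrow> real" where
  "epsr eps1 t = eps1 / 2 ^ (t - 1)"

definition theta :: "nat \<Rightarrow> nat set \<Rightarrow> real \<Rightarrow> real" where
  "theta d V et = real (d - card V) * et"

definition accept_cands :: "nat \<Rightarrow> nat \<Rightarrow> (family \<Rightarrow> real) \<Rightarrow> real \<Rightarrow> nat set \<Rightarrow> family set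
    \<Rightarrow> family set \<Rightarrow> family set" where
  "accept_cands d k Hh et V A Ghat =
    (let GJ = Gj d k A; Ehat = ec_of d k Ghat;
         L = {E \<in> ECs d k. E \<inter> GJ \<noteq> {} \<and>
                Shat_set Hh (Ehat \<inter> GJ) - Shat_set Hh (E \<inter> GJ) \<le> theta d V et}
     in {f \<in> Ufam (Ehat \<inter> GJ) \<inter> Fact d k V. \<forall>E\<in>L. f \<in> Ufam (E \<inter> GJ)})"

definition iter_step :: "nat \<Rightarrow> nat \<Rightarrow> (family \<Rightarrow> real) \<Rightarrow> real \<Rightarrow> nat set \<Rightarrow> family set
    \<Rightarrow> family set \<Rightarrow> nat set \<Rightarrow> family set \<Rightarrow> bool" where
  "iter_step d k Hh et V A Ghat V' A' \<longleftrightarrow>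
     Ghat \<in> Gj d k A \<and> (\<forall>G\<in>Gj d k A. score Hh G \<le> score Hh Ghat) \<and>
     (let C = accept_cands d k Hh et V A Ghat in
       if C \<noteq> {} then (\<exists>f\<in>C. V' = insert (fst f) V \<and> A' = insert f A)
       else V' = V \<and> A' = A)"

text \<open>Hh t = estimates after round t; rnd j = round of
  iteration j; Vs j, As j = V and A_j at the start of iteration j (Vs (J+1), As (J+1) final);
  Gh j = the chosen maximiser of iteration j.\<close>
definition is_run :: "nat \<Rightarrow> nat \<Rightarrow> real \<Rightarrow> real \<Rightarrow> (nat \<Rightarrow> family \<Rightarrow> real) \<Rightarrow> (nat \<Rightarrow> nat)
    \<Rightarrow> (nat \<Rightarrow> nat set) \<Rightarrow> (nat \<Rightarrow> family set) \<Rightarrow> (nat \<Rightarrow> family set) \<Rightarrow> nat \<Rightarrow> bool" where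
  "is_run d k eps eps1 Hh rnd Vs As Gh J \<longleftrightarrow>
     As 1 = {} \<and> Vs 1 = {} \<and> rnd 1 = 1 \<and>
     (1 \<le> J \<longleftrightarrow> epsr eps1 1 > eps / real d) \<and>
     (\<forall>j\<in>{1..J}. iter_step d k (Hh (rnd j)) (epsr eps1 (rnd j)) (Vs j) (As j) (Gh j)
                    (Vs (Suc j)) (As (Suc j))) \<and>
     (\<forall>j\<in>{1..<J}.
        (if As (Suc j) \<noteq> As j then rnd (Suc j) = rnd j
         else card (Vs (Suc j)) \<noteq> d \<and>
              epsr eps1 (Suc (rnd j)) > eps / real (d - card (Vs (Suc j))) \<and>
              rnd (Suc j) = Suc (rnd j))) \<and>
     (1 \<le> J \<longrightarrow> As (Suc J) = As J \<and>
        (card (Vs (Suc J)) = d \<or> \<not> epsr eps1 (Suc (rnd J)) > eps / real (d - card (Vs (Suc J)))))"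

text \<open>The event E: at every round t of the run, every family active w.r.t. the value of V at
  the start of round t is estimated within eps_t/2.\<close>
definition good_event :: "nat \<Rightarrow> nat \<Rightarrow> real \<Rightarrow> (family \<Rightarrow> real) \<Rightarrow> (nat \<Rightarrow> family \<Rightarrow> real)
    \<Rightarrow> (nat \<Rightarrow> nat) \<Rightarrow> (nat \<Rightarrow> nat set) \<Rightarrow> nat \<Rightarrow> bool" where
  "good_event d k eps1 H Hh rnd Vs J \<longleftrightarrow>
     (\<forall>j\<in>{1..J}. (j = 1 \<or> rnd (j - 1) \<noteq> rnd j) \<longrightarrow>
        (\<forall>f\<in>Fact d k (Vs j). \<bar>Hh (rnd j) f - H f\<bar> \<le> epsr eps1 (rnd j) / 2))"

definition Gstar_j :: "nat \<Rightarrow> nat \<Rightarrow> (family \<Rightarrow> real) \<Rightarrow> family set \<Rightarrow> family set set" where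
  "Gstar_j d k H A = {G \<in> Gj d k A. score H G = Sstar d k H}"

text \<open>S_j^neg(f), with max of the empty set = -infinity.\<close>
definition Sneg :: "nat \<Rightarrow> nat \<Rightarrow> (family \<Rightarrow> real) \<Rightarrow> family set \<Rightarrow> family \<Rightarrow> ereal" where
  "Sneg d k H A f = Sup (ereal ` score_EC H ` {E \<in> ECs d k. E \<inter> Gj d k A \<noteq> {} \<and>
                                              f \<notin> Ufam (E \<inter> Gj d k A)})"

end

theory Submission
  imports Defs
begin

text \<open>On the event, every family whose child is not yet in \<open>V\<close> is estimated within
  \<open>\<epsilon>\<^sub>t/2\<close>, and a DAG of \<open>\<G>\<^sub>j\<close> has at most \<open>d - |V|\<close> such families, the others being the
  accepted families \<open>\<A>\<^sub>j\<close> common to all of \<open>\<G>\<^sub>j\<close>. Hence on \<open>\<G>\<^sub>j\<close> the estimated score is the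
  true score plus one common constant \<open>c\<close>, up to \<open>\<theta>\<^sub>j/2\<close>. A class avoiding \<open>f\<close> therefore has
  estimated score below \<open>\<S>\<^sup>* - 2\<theta>\<^sub>j + \<theta>\<^sub>j/2 + c\<close>, while the class of the empirical maximiser
  reaches \<open>\<S>\<^sup>* - \<theta>\<^sub>j/2 + c\<close>, since the maximiser beats an optimal DAG containing \<open>f\<close>. So no
  class of \<open>L\<^sub>j\<close> avoids \<open>f\<close>, and \<open>f\<close> is a candidate for acceptance.\<close>

lemma finite_families: "finite (families d k)"
proof (rule finite_subset)
  show "families d k \<subseteq> {..<d} \<times> Pow {..<d}" by (auto simp: families_def)
qed auto

lemma finite_dags: "finite (dags d k)"
  by (rule finite_subset[of _ "Pow (families d k)"]) (auto simp: dags_def finite_families)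

lemma ECs_subset_dags: "E \<in> ECs d k \<Longrightarrow> E \<subseteq> dags d k"
  by (auto simp: ECs_def quotient_def meq_rel_def)

lemma ec_of_in_ECs: "G \<in> dags d k \<Longrightarrow> ec_of d k G \<in> ECs d k"
  by (auto simp: ec_of_def ECs_def intro!: quotientI)

lemma mem_ec_of_self: "G \<in> dags d k \<Longrightarrow> G \<in> ec_of d k G"
  by (auto simp: ec_of_def meq_rel_def markov_equiv_def)

lemma Fact_antimono: "V \<subseteq> V' \<Longrightarrow> Fact d k V' \<subseteq> Fact d k V"
  by (auto simp: Fact_def)

lemma dag_inj_on_fst:
  assumes "G \<in> dags d k"
  shows "inj_on fst G"
proof (rule inj_onI)
  fix x y assume xy: "x \<in> G" "y \<in> G" "fst x = fst y"
  then obtain i Pa Pa' where "x = (i, Pa)" "y = (i, Pa')" by (cases x, cases y) auto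
  moreover have "i < d" using xy \<open>x = (i, Pa)\<close> assms by (auto simp: dags_def families_def)
  ultimately show "x = y" using xy assms by (auto simp: dags_def)
qed

lemma dag_diff_subset_Fact:
  assumes G: "G \<in> dags d k" and AG: "A \<subseteq> G"
  shows "G - A \<subseteq> Fact d k (fst ` A)"
proof
  fix g assume g: "g \<in> G - A"
  have "fst g \<notin> fst ` A"
    using dag_inj_on_fst[OF G] g AG by (auto dest: inj_onD)
  thus "g \<in> Fact d k (fst ` A)" using g G by (auto simp: Fact_def dags_def)
qed

lemma card_dag_diff_le:
  assumes G: "G \<in> dags d k" and AG: "A \<subseteq> G"
  shows "card (G - A) \<le> d - card (fst ` A)"
proof -
  have Gf: "G \<subseteq> families d k" using G by (simp add: dags_def)
  have "card (G - A) = card (fst ` (G - A))"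
    using dag_inj_on_fst[OF G] by (intro card_image[symmetric]) (auto intro: inj_on_subset)
  also have "\<dots> \<le> card ({..<d} - fst ` A)"
    using dag_diff_subset_Fact[OF G AG] Gf by (intro card_mono) (auto simp: Fact_def families_def)
  also have "\<dots> = d - card (fst ` A)"
  proof -
    have "finite (fst ` A)"
      using AG Gf by (intro finite_imageI finite_subset[OF _ finite_families]) auto
    moreover have "fst ` A \<subseteq> {..<d}" using AG Gf by (auto simp: families_def)
    ultimately show ?thesis by (simp add: card_Diff_subset)
  qed
  finally show ?thesis .
qed

lemma score_error_uniform:
  assumes G: "G \<in> Gj d k A"
    and est: "\<forall>g\<in>Fact d k (fst ` A). \<bar>Hh g - H g\<bar> \<le> et / 2" and et: "0 \<le> et"
  shows "\<bar>score Hh G - score H G + (\<Sum>a\<in>A. Hh a - H a)\<bar> \<le> theta d (fst ` A) et / 2"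
proof -
  have dag: "G \<in> dags d k" and AG: "A \<subseteq> G" using G by (auto simp: Gj_def)
  have finG: "finite G" using dag by (auto simp: dags_def intro: finite_subset[OF _ finite_families])
  have "score Hh G - score H G + (\<Sum>a\<in>A. Hh a - H a) = - (\<Sum>g\<in>G - A. Hh g - H g)"
    using sum.subset_diff[OF AG finG, of "\<lambda>g. Hh g - H g"] by (simp add: score_def sum_subtractf)
  moreover have "\<bar>\<Sum>g\<in>G - A. Hh g - H g\<bar> \<le> theta d (fst ` A) et / 2"
  proof -
    have "\<bar>\<Sum>g\<in>G - A. Hh g - H g\<bar> \<le> (\<Sum>g\<in>G - A. \<bar>Hh g - H g\<bar>)" by (rule sum_abs)
    also have "\<dots> \<le> (\<Sum>g\<in>G - A. et / 2)"
      using dag_diff_subset_Fact[OF dag AG] est by (intro sum_mono) auto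
    also have "\<dots> = real (card (G - A)) * (et / 2)" by simp
    also have "\<dots> \<le> real (d - card (fst ` A)) * (et / 2)"
      using card_dag_diff_le[OF dag AG] et by (intro mult_right_mono) auto
    finally show ?thesis by (simp add: theta_def)
  qed
  ultimately show ?thesis by simp
qed

lemma mem_Ufam_of_near_optimal_class:
  assumes Ghat: "Ghat \<in> Gj d k A" and Ghat_max: "\<forall>G\<in>Gj d k A. score Hh G \<le> score Hh Ghat"
    and err: "\<forall>G\<in>Gj d k A. \<bar>score Hh G - score H G + c\<bar> \<le> th / 2"
    and Gs: "Gs \<in> Gstar_j d k H A" and f: "f \<in> Gs"
    and Sneg_less: "Sneg d k H A f < ereal (Sstar d k H - 2 * th)"
    and E: "E \<in> ECs d k" "E \<inter> Gj d k A \<noteq> {}"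
    and near: "Shat_set Hh (ec_of d k Ghat \<inter> Gj d k A) - Shat_set Hh (E \<inter> Gj d k A) \<le> th"
  shows "f \<in> Ufam (E \<inter> Gj d k A)"
proof (rule ccontr)
  assume f_notin: "f \<notin> Ufam (E \<inter> Gj d k A)"
  have Ghat_dag: "Ghat \<in> dags d k" using Ghat by (simp add: Gj_def)
  have finE: "finite E" and finEhat: "finite (ec_of d k Ghat)"
    using ECs_subset_dags[OF E(1)] ECs_subset_dags[OF ec_of_in_ECs[OF Ghat_dag]] finite_dags
    by (auto intro: finite_subset)
  have "Shat_set Hh (E \<inter> Gj d k A) \<in> score Hh ` (E \<inter> Gj d k A)"
    unfolding Shat_set_def using finE E(2) by (intro Max_in) auto
  then obtain G' where G': "G' \<in> E" "G' \<in> Gj d k A" "Shat_set Hh (E \<inter> Gj d k A) = score Hh G'"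
    by auto
  have "score Hh Ghat \<le> Shat_set Hh (ec_of d k Ghat \<inter> Gj d k A)"
    unfolding Shat_set_def using finEhat mem_ec_of_self[OF Ghat_dag] Ghat by (intro Max_ge) auto
  moreover have "score Hh Gs \<le> score Hh Ghat" and "score H Gs = Sstar d k H"
    using Ghat_max Gs by (auto simp: Gstar_j_def)
  moreover have "score H G' \<le> score_EC H E"
    unfolding score_EC_def using finE G' by (intro Max_ge) auto
  moreover have "\<bar>score Hh Gs - score H Gs + c\<bar> \<le> th / 2" "\<bar>score Hh G' - score H G' + c\<bar> \<le> th / 2"
    using err Gs G'(2) by (auto simp: Gstar_j_def)
  ultimately have "Sstar d k H - 2 * th \<le> score_EC H E"
    using near G'(3) by linarith
  also have "ereal (score_EC H E) \<le> Sneg d k H A f"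
    unfolding Sneg_def using E f_notin by (intro Sup_upper) auto
  finally show False using Sneg_less by simp
qed

lemma mem_accept_cands:
  assumes Ghat: "Ghat \<in> Gj d k A" and Ghat_max: "\<forall>G\<in>Gj d k A. score Hh G \<le> score Hh Ghat"
    and err: "\<forall>G\<in>Gj d k A. \<bar>score Hh G - score H G + c\<bar> \<le> theta d V et / 2"
    and theta_nonneg: "0 \<le> theta d V et"
    and f: "f \<in> Ufam (Gstar_j d k H A) \<inter> Fact d k V"
    and Sneg_less: "Sneg d k H A f < ereal (Sstar d k H - 2 * theta d V et)"
  shows "f \<in> accept_cands d k Hh et V A Ghat"
proof -
  obtain Gs where Gs: "Gs \<in> Gstar_j d k H A" "f \<in> Gs" using f by (auto simp: Ufam_def)
  note near_class = mem_Ufam_of_near_optimal_class[OF Ghat Ghat_max err Gs Sneg_less]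
  have Ghat_dag: "Ghat \<in> dags d k" using Ghat by (simp add: Gj_def)
  have "f \<in> Ufam (ec_of d k Ghat \<inter> Gj d k A)"
    using near_class[OF ec_of_in_ECs[OF Ghat_dag]] mem_ec_of_self[OF Ghat_dag] Ghat theta_nonneg
    by auto
  with f near_class show ?thesis by (auto simp: accept_cands_def Let_def)
qed

lemma iter_step_inserts_cand:
  assumes "iter_step d k Hh et V A Ghat V' A'" and "accept_cands d k Hh et V A Ghat \<noteq> {}"
  shows "\<exists>f'\<in>Fact d k V. A' = insert f' A"
proof -
  obtain f' where "f' \<in> accept_cands d k Hh et V A Ghat" "A' = insert f' A"
    using assms unfolding iter_step_def Let_def by (auto split: if_splits)
  thus ?thesis by (auto simp: accept_cands_def Let_def)
qed

lemma run_iter_step: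
  assumes "is_run d k eps eps1 Hh rnd Vs As Gh J" and "i \<in> {1..J}"
  shows "iter_step d k (Hh (rnd i)) (epsr eps1 (rnd i)) (Vs i) (As i) (Gh i) (Vs (Suc i)) (As (Suc i))"
  using assms by (simp add: is_run_def)

lemma run_step_cases:
  assumes "is_run d k eps eps1 Hh rnd Vs As Gh J" and "i \<in> {1..J}"
  obtains "Vs (Suc i) = Vs i" "As (Suc i) = As i"
    | g where "Vs (Suc i) = insert (fst g) (Vs i)" "As (Suc i) = insert g (As i)"
  using run_iter_step[OF assms] unfolding iter_step_def Let_def by (metis (no_types, lifting))

lemma run_V_eq_fst_A:
  assumes run: "is_run d k eps eps1 Hh rnd Vs As Gh J" and i: "i \<in> {1..J}"
  shows "Vs i = fst ` As i"
  using i
proof (induction i)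
  case (Suc i)
  show ?case
  proof (cases "i = 0")
    case True thus ?thesis using run by (simp add: is_run_def)
  next
    case False
    hence i': "i \<in> {1..J}" and IH: "Vs i = fst ` As i" using Suc by auto
    show ?thesis by (cases rule: run_step_cases[OF run i']) (simp_all add: IH)
  qed
qed simp

lemma run_V_mono:
  assumes "is_run d k eps eps1 Hh rnd Vs As Gh J" and "i \<in> {1..J}"
  shows "Vs i \<subseteq> Vs (Suc i)"
  by (cases rule: run_step_cases[OF assms]) auto

text \<open>The event only speaks about the first iteration of each round; within a round the
  estimates are unchanged while \<open>V\<close> grows, so the set of active families shrinks.\<close>

lemma run_estimates:
  assumes run: "is_run d k eps eps1 Hh rnd Vs As Gh J"
    and ev: "good_event d k eps1 H Hh rnd Vs J" and i: "i \<in> {1..J}"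
  shows "\<forall>g\<in>Fact d k (Vs i). \<bar>Hh (rnd i) g - H g\<bar> \<le> epsr eps1 (rnd i) / 2"
  using i
proof (induction i)
  case (Suc i)
  show ?case
  proof (cases "i \<noteq> 0 \<and> rnd (Suc i) = rnd i")
    case True
    hence "i \<in> {1..J}" using Suc by auto
    hence "Fact d k (Vs (Suc i)) \<subseteq> Fact d k (Vs i)" by (intro Fact_antimono run_V_mono[OF run])
    with True Suc.IH \<open>i \<in> {1..J}\<close> show ?thesis by auto
  next
    case False
    thus ?thesis using ev Suc.prems unfolding good_event_def by auto
  qed
qed simp

theorem lemma3:
  fixes P :: "(nat \<Rightarrow> 'v) pmf" and d k J j :: nat and eps eps1 :: real
    and Hh :: "nat \<Rightarrow> family \<Rightarrow> real" and rnd :: "nat \<Rightarrow> nat"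
    and Vs :: "nat \<Rightarrow> nat set" and As Gh :: "nat \<Rightarrow> family set" and f :: family
  assumes "0 < d" and "0 < k" and "finite (set_pmf P)" and "0 < eps" and "0 < eps1"
    and "is_run d k eps eps1 Hh rnd Vs As Gh J"
    and "good_event d k eps1 (Hfam P) Hh rnd Vs J"
    and "j \<in> {1..J}"
    and "f \<in> Ufam (Gstar_j d k (Hfam P) (As j)) \<inter> Fact d k (Vs j)"
    and "Sneg d k (Hfam P) (As j) f
           < ereal (Sstar d k (Hfam P) - 2 * theta d (Vs j) (epsr eps1 (rnd j)))"
  shows "\<exists>f'\<in>Fact d k (Vs j). As (Suc j) = insert f' (As j)"
proof -
  note run = assms(6) and j = assms(8)
  note step = run_iter_step[OF run j]
  have V_eq: "Vs j = fst ` As j" by (rule run_V_eq_fst_A[OF run j])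
  have et: "0 \<le> epsr eps1 (rnd j)" using assms(5) by (simp add: epsr_def)
  have "\<forall>G\<in>Gj d k (As j). \<bar>score (Hh (rnd j)) G - score (Hfam P) G + (\<Sum>a\<in>As j. Hh (rnd j) a - Hfam P a)\<bar>
          \<le> theta d (Vs j) (epsr eps1 (rnd j)) / 2"
    using score_error_uniform run_estimates[OF run assms(7) j] et unfolding V_eq by blast
  moreover have "0 \<le> theta d (Vs j) (epsr eps1 (rnd j))" using et by (simp add: theta_def)
  ultimately have "f \<in> accept_cands d k (Hh (rnd j)) (epsr eps1 (rnd j)) (Vs j) (As j) (Gh j)"
    using mem_accept_cands step assms(9,10) by (auto simp: iter_step_def)
  thus ?thesis using iter_step_inserts_cand[OF step] by blast
qed

end
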